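(* Let $P=\Bbbk[x_1,x_2,x_3]$ with Poisson bracket $\{x_1,x_2\}=x_2^2$, $\{x_2,x_3\}=3x_1^2$, $\{x_3,x_1\}=2x_2x_3$. Then $\mathrm{PAut}_{\mathrm{gr}}(P)=\{a\cdot\mathrm{id}: a\in\Bbbk^\times\}$, i.e. every graded Poisson automorphism acts on $P_1$ as a nonzero scalar, and $P$ has no Poisson reflections.
   Context: $\Bbbk$ is algebraically closed of characteristic $0$; $P$ has the standard grading. A graded Poisson automorphism is a degree-preserving bijective algebra homomorphism preserving the bracket. A Poisson reflection is a finite-order graded Poisson automorphism $\phi$ with $\phi|_{P_1}$ having eigenvalues $1,1,\xi$ for a primitive root of unity $\xi\neq1$. *)

theory Defs
  imports "HOL-Library.Poly_Mapping" "HOL-Computational_Algebra.Polynomial"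
    "Jordan_Normal_Form.Char_Poly"
begin

datatype var = X1 | X2 | X3

type_synonym 'k mpoly3 = "(var \<Rightarrow>\<^sub>0 nat) \<Rightarrow>\<^sub>0 'k"

definition Var :: "var \<Rightarrow> 'k::comm_ring_1 mpoly3" where
  "Var v = Poly_Mapping.single (Poly_Mapping.single v 1) 1"

definition Const :: "'k::comm_ring_1 \<Rightarrow> 'k mpoly3" where
  "Const c = Poly_Mapping.single 0 c"

definition mon_deg :: "(var \<Rightarrow>\<^sub>0 nat) \<Rightarrow> nat" where
  "mon_deg m = (\<Sum>v\<in>Poly_Mapping.keys m. Poly_Mapping.lookup m v)"

text \<open>Homogeneous of degree d (the zero polynomial is homogeneous of every degree);
  P_d is the set of such polynomials.\<close>
definition homog :: "nat \<Rightarrow> 'k::comm_ring_1 mpoly3 \<Rightarrow> bool" where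
  "homog d p \<longleftrightarrow> (\<forall>m\<in>Poly_Mapping.keys p. mon_deg m = d)"

definition pd :: "var \<Rightarrow> 'k::comm_ring_1 mpoly3 \<Rightarrow> 'k mpoly3" where
  "pd v p = Abs_poly_mapping (\<lambda>m. of_nat (Poly_Mapping.lookup m v + 1)
              * Poly_Mapping.lookup p (m + Poly_Mapping.single v 1))"

fun gen_br :: "var \<Rightarrow> var \<Rightarrow> 'k::comm_ring_1 mpoly3" where
  "gen_br X1 X2 = Var X2 ^ 2"
| "gen_br X2 X1 = - (Var X2 ^ 2)"
| "gen_br X2 X3 = 3 * Var X1 ^ 2"
| "gen_br X3 X2 = - (3 * Var X1 ^ 2)"
| "gen_br X3 X1 = 2 * Var X2 * Var X3"
| "gen_br X1 X3 = - (2 * Var X2 * Var X3)"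
| "gen_br _ _ = 0"

text \<open>The Poisson bracket on P: the unique biderivation extending the generator brackets,
  {f,g} = sum_{i,j} (d f/d x_i) (d g/d x_j) {x_i,x_j}.\<close>
definition pbr :: "'k::comm_ring_1 mpoly3 \<Rightarrow> 'k mpoly3 \<Rightarrow> 'k mpoly3" where
  "pbr f g = (\<Sum>i\<in>{X1,X2,X3}. \<Sum>j\<in>{X1,X2,X3}. pd i f * pd j g * gen_br i j)"

definition gr_poisson_aut :: "('k::comm_ring_1 mpoly3 \<Rightarrow> 'k mpoly3) \<Rightarrow> bool" where
  "gr_poisson_aut \<phi> \<longleftrightarrow>
     bij \<phi>
   \<and> (\<forall>f g. \<phi> (f + g) = \<phi> f + \<phi> g)
   \<and> (\<forall>f g. \<phi> (f * g) = \<phi> f * \<phi> g)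
   \<and> \<phi> 1 = 1
   \<and> (\<forall>c f. \<phi> (Const c * f) = Const c * \<phi> f)
   \<and> (\<forall>d f. homog d f \<longrightarrow> homog d (\<phi> f))
   \<and> (\<forall>f g. \<phi> (pbr f g) = pbr (\<phi> f) (\<phi> g))"

text \<open>Matrix of the restriction of phi to P_1 with respect to the basis x1,x2,x3
  (column j = coordinates of phi(x_j)).\<close>
definition lin_mat :: "('k::comm_ring_1 mpoly3 \<Rightarrow> 'k mpoly3) \<Rightarrow> 'k mat" where
  "lin_mat \<phi> = mat 3 3 (\<lambda>(i,j). Poly_Mapping.lookup (\<phi> (Var ([X1,X2,X3] ! j)))
                                  (Poly_Mapping.single ([X1,X2,X3] ! i) 1))"

definition poisson_reflection :: "('k::comm_ring_1 mpoly3 \<Rightarrow> 'k mpoly3) \<Rightarrow> bool" where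
  "poisson_reflection \<phi> \<longleftrightarrow>
     gr_poisson_aut \<phi>
   \<and> (\<exists>n>0. (\<phi> ^^ n) = id)
   \<and> (\<exists>\<xi> r. r > 0 \<and> \<xi> ^ r = 1 \<and> \<xi> \<noteq> 1
        \<and> char_poly (lin_mat \<phi>) = [:-1, 1:] ^ 2 * [:-\<xi>, 1:])"

end

theory Submission
  imports Defs
begin

text \<open>The bracket is the Jacobian Poisson structure of \<open>\<Omega> = x1\<^sup>3 + x2\<^sup>2 x3\<close>, i.e.
  \<open>{f, g} = (\<nabla>f \<times> \<nabla>g) \<cdot> \<nabla>\<Omega>\<close>. A graded automorphism \<open>\<phi>\<close> sends \<open>x1, x2, x3\<close> to linear
  forms \<open>p, q, r\<close>, and on linear forms the bracket is the quadratic form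
  \<open>3 w1 x1\<^sup>2 + w3 x2\<^sup>2 + 2 w2 x2 x3\<close> with \<open>w\<close> the cross product of the coefficient vectors.
  Comparing coefficients in \<open>q\<^sup>2 = {p, q}\<close>, \<open>3 p\<^sup>2 = {q, r}\<close> and \<open>2 q r = {r, p}\<close>
  forces \<open>p = a x1\<close>, \<open>q = a x2\<close>, \<open>r = a x3\<close> with \<open>a \<noteq> 0\<close>. Hence the linear part of every
  graded Poisson automorphism is scalar, its characteristic polynomial is \<open>(t - a)\<^sup>3\<close>, and
  this is never of the shape \<open>(t - 1)\<^sup>2 (t - \<xi>)\<close> with \<open>\<xi> \<noteq> 1\<close>.\<close>

abbreviation mon_var :: "var \<Rightarrow> (var \<Rightarrow>\<^sub>0 nat)" where
  "mon_var v \<equiv> Poly_Mapping.single v 1"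

lemma UNIV_var: "(UNIV :: var set) = {X1, X2, X3}"
  by (auto intro: var.exhaust)

instance var :: finite
  by standard (simp add: UNIV_var)

lemma monomial_eq_iff:
  "(m :: var \<Rightarrow>\<^sub>0 nat) = m' \<longleftrightarrow>
     Poly_Mapping.lookup m X1 = Poly_Mapping.lookup m' X1 \<and>
     Poly_Mapping.lookup m X2 = Poly_Mapping.lookup m' X2 \<and>
     Poly_Mapping.lookup m X3 = Poly_Mapping.lookup m' X3"
proof
  assume "Poly_Mapping.lookup m X1 = Poly_Mapping.lookup m' X1 \<and>
    Poly_Mapping.lookup m X2 = Poly_Mapping.lookup m' X2 \<and>
    Poly_Mapping.lookup m X3 = Poly_Mapping.lookup m' X3"
  then show "m = m'"
    by (intro poly_mapping_eqI) (metis var.exhaust)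
qed simp

lemma mon_deg_eq:
  "mon_deg m = Poly_Mapping.lookup m X1 + Poly_Mapping.lookup m X2 + Poly_Mapping.lookup m X3"
proof -
  have "mon_deg m = (\<Sum>v\<in>UNIV. Poly_Mapping.lookup m v)"
    unfolding mon_deg_def
    by (rule sum.mono_neutral_left) (auto simp: UNIV_var[symmetric] in_keys_iff)
  then show ?thesis by (simp add: UNIV_var)
qed

lemma mon_deg_eq_1D: "mon_deg m = 1 \<Longrightarrow> m = mon_var X1 \<or> m = mon_var X2 \<or> m = mon_var X3"
  by (simp add: mon_deg_eq monomial_eq_iff lookup_single when_def) arith

definition lin_form :: "'k::comm_ring_1 \<Rightarrow> 'k \<Rightarrow> 'k \<Rightarrow> 'k mpoly3" where
  "lin_form a b c = Poly_Mapping.single (mon_var X1) a + Poly_Mapping.single (mon_var X2) b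
     + Poly_Mapping.single (mon_var X3) c"

definition quad_form :: "'k::comm_ring_1 \<Rightarrow> 'k \<Rightarrow> 'k \<Rightarrow> 'k \<Rightarrow> 'k \<Rightarrow> 'k \<Rightarrow> 'k mpoly3" where
  "quad_form a11 a22 a33 a12 a13 a23 =
     Poly_Mapping.single (mon_var X1 + mon_var X1) a11 + Poly_Mapping.single (mon_var X2 + mon_var X2) a22
     + Poly_Mapping.single (mon_var X3 + mon_var X3) a33 + Poly_Mapping.single (mon_var X1 + mon_var X2) a12
     + Poly_Mapping.single (mon_var X1 + mon_var X3) a13 + Poly_Mapping.single (mon_var X2 + mon_var X3) a23"

lemma lookup_lin_form:
  "Poly_Mapping.lookup (lin_form a b c) (mon_var X1) = a"
  "Poly_Mapping.lookup (lin_form a b c) (mon_var X2) = b"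
  "Poly_Mapping.lookup (lin_form a b c) (mon_var X3) = c"
  by (simp_all add: lin_form_def lookup_add lookup_single when_def monomial_eq_iff)

lemma lin_form_eq_iff: "lin_form a b c = lin_form a' b' c' \<longleftrightarrow> a = a' \<and> b = b' \<and> c = c'"
  by (metis lookup_lin_form)

lemma quad_form_eq_iff:
  "quad_form a11 a22 a33 a12 a13 a23 = quad_form b11 b22 b33 b12 b13 b23 \<longleftrightarrow>
     a11 = b11 \<and> a22 = b22 \<and> a33 = b33 \<and> a12 = b12 \<and> a13 = b13 \<and> a23 = b23"
proof
  assume "quad_form a11 a22 a33 a12 a13 a23 = quad_form b11 b22 b33 b12 b13 b23"
  then have "\<And>m. Poly_Mapping.lookup (quad_form a11 a22 a33 a12 a13 a23) m
      = Poly_Mapping.lookup (quad_form b11 b22 b33 b12 b13 b23) m"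
    by simp
  from this[of "mon_var X1 + mon_var X1"] this[of "mon_var X2 + mon_var X2"]
       this[of "mon_var X3 + mon_var X3"] this[of "mon_var X1 + mon_var X2"]
       this[of "mon_var X1 + mon_var X3"] this[of "mon_var X2 + mon_var X3"]
  show "a11 = b11 \<and> a22 = b22 \<and> a33 = b33 \<and> a12 = b12 \<and> a13 = b13 \<and> a23 = b23"
    by (simp_all add: quad_form_def lookup_add lookup_single when_def monomial_eq_iff)
qed simp

lemma lin_form_zero: "lin_form 0 0 0 = 0"
  by (simp add: lin_form_def)

lemma Var_eq_lin_form: "Var X1 = lin_form 1 0 0" "Var X2 = lin_form 0 1 0" "Var X3 = lin_form 0 0 1"
  by (simp_all add: Var_def lin_form_def)

lemma add_lin_form: "lin_form a b c + lin_form a' b' c' = lin_form (a + a') (b + b') (c + c')"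
  by (simp add: lin_form_def single_add algebra_simps)

lemma Const_mult_lin_form: "Const k * lin_form a b c = lin_form (k * a) (k * b) (k * c)"
  by (simp add: Const_def lin_form_def ring_distribs mult_single)

lemma lin_form_eq_sum_Var: "lin_form a b c = Const a * Var X1 + Const b * Var X2 + Const c * Var X3"
  by (simp add: Var_eq_lin_form Const_mult_lin_form add_lin_form)

lemma Const_mult_quad_form:
  "Const k * quad_form a11 a22 a33 a12 a13 a23
     = quad_form (k * a11) (k * a22) (k * a33) (k * a12) (k * a13) (k * a23)"
  by (simp add: Const_def quad_form_def ring_distribs mult_single)

lemma mult_lin_form:
  "lin_form p1 p2 p3 * lin_form q1 q2 q3 =
     quad_form (p1 * q1) (p2 * q2) (p3 * q3) (p1 * q2 + p2 * q1) (p1 * q3 + p3 * q1) (p2 * q3 + p3 * q2)"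
  by (rule poly_mapping_eqI)
    (simp add: lin_form_def quad_form_def ring_distribs mult_single lookup_add lookup_single when_def
      monomial_eq_iff add.commute)

lemma homog_1_imp_lin_form:
  assumes "homog 1 f"
  obtains a b c where "f = lin_form a b c"
proof -
  let ?g = "lin_form (Poly_Mapping.lookup f (mon_var X1)) (Poly_Mapping.lookup f (mon_var X2))
    (Poly_Mapping.lookup f (mon_var X3))"
  have "Poly_Mapping.lookup f m = Poly_Mapping.lookup ?g m" for m
  proof (cases "m \<in> Poly_Mapping.keys f")
    case True
    with assms have "mon_deg m = 1"
      by (simp add: homog_def)
    then consider "m = mon_var X1" | "m = mon_var X2" | "m = mon_var X3"
      using mon_deg_eq_1D by blast
    then show ?thesis
      by cases (simp_all only: lookup_lin_form)
  next
    case False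
    then show ?thesis
      by (auto simp: in_keys_iff lin_form_def lookup_add lookup_single when_def)
  qed
  then show thesis
    by (intro that poly_mapping_eqI)
qed

lemma homog_1_Var: "homog 1 (Var v)"
  by (cases v) (simp_all add: homog_def Var_def mon_deg_eq lookup_single when_def)

lemma pd_lin_form: "pd v (lin_form a b c) = Const (case v of X1 \<Rightarrow> a | X2 \<Rightarrow> b | X3 \<Rightarrow> c)"
proof -
  have "(\<lambda>m. of_nat (Poly_Mapping.lookup m v + 1) * Poly_Mapping.lookup (lin_form a b c) (m + mon_var v))
      = Poly_Mapping.lookup (Const (case v of X1 \<Rightarrow> a | X2 \<Rightarrow> b | X3 \<Rightarrow> c))"
    by (rule ext, cases v)
      (auto simp: Const_def lin_form_def lookup_add lookup_single when_def monomial_eq_iff)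
  then show ?thesis unfolding pd_def by simp
qed

lemma gen_br_eq_single:
  "(gen_br X1 X2 :: 'k::comm_ring_1 mpoly3) = Poly_Mapping.single (mon_var X2 + mon_var X2) 1"
  "(gen_br X2 X1 :: 'k mpoly3) = Poly_Mapping.single (mon_var X2 + mon_var X2) (-1)"
  "(gen_br X2 X3 :: 'k mpoly3) = Poly_Mapping.single (mon_var X1 + mon_var X1) 3"
  "(gen_br X3 X2 :: 'k mpoly3) = Poly_Mapping.single (mon_var X1 + mon_var X1) (-3)"
  "(gen_br X3 X1 :: 'k mpoly3) = Poly_Mapping.single (mon_var X2 + mon_var X3) 2"
  "(gen_br X1 X3 :: 'k mpoly3) = Poly_Mapping.single (mon_var X2 + mon_var X3) (-2)"
  by (simp_all add: Var_def power2_eq_square mult_single single_uminus flip: single_numeral)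

lemma gen_br_self: "gen_br v v = 0"
  by (cases v) simp_all

lemma pbr_lin_form:
  "pbr (lin_form p1 p2 p3) (lin_form q1 q2 q3) =
     quad_form (3 * (p2 * q3 - p3 * q2)) (p1 * q2 - p2 * q1) 0 0 0 (2 * (p3 * q1 - p1 * q3))"
  by (rule poly_mapping_eqI)
    (simp add: pbr_def pd_lin_form gen_br_eq_single gen_br_self Const_def mult_single quad_form_def
      lookup_add lookup_single when_def monomial_eq_iff del: gen_br.simps)

lemma pbr_Var:
  "pbr (Var X1) (Var X2) = (Var X2 * Var X2 :: 'k::comm_ring_1 mpoly3)"
  "pbr (Var X2) (Var X3) = (Const 3 * (Var X1 * Var X1) :: 'k mpoly3)"
  "pbr (Var X3) (Var X1) = (Const 2 * (Var X2 * Var X3) :: 'k mpoly3)"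
  by (simp_all add: Var_eq_lin_form pbr_lin_form mult_lin_form Const_mult_quad_form quad_form_eq_iff)

lemma lin_forms_pbr_relations:
  fixes p1 p2 p3 q1 q2 q3 r1 r2 r3 :: "'k::{idom, ring_char_0}"
  assumes "lin_form q1 q2 q3 \<noteq> 0"
    and "lin_form q1 q2 q3 * lin_form q1 q2 q3 = pbr (lin_form p1 p2 p3) (lin_form q1 q2 q3)"
    and "Const 3 * (lin_form p1 p2 p3 * lin_form p1 p2 p3)
      = pbr (lin_form q1 q2 q3) (lin_form r1 r2 r3)"
    and "Const 2 * (lin_form q1 q2 q3 * lin_form r1 r2 r3)
      = pbr (lin_form r1 r2 r3) (lin_form p1 p2 p3)"
  shows "p1 \<noteq> 0 \<and> p2 = 0 \<and> p3 = 0 \<and> q1 = 0 \<and> q2 = p1 \<and> q3 = 0 \<and> r1 = 0 \<and> r2 = 0 \<and> r3 = p1"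
proof -
  have q_nonzero: "\<not> (q1 = 0 \<and> q2 = 0 \<and> q3 = 0)"
    using assms(1) lin_form_zero by auto
  have coeffs_12: "q1 * q1 = 3 * (p2 * q3 - p3 * q2)" "q2 * q2 = p1 * q2 - p2 * q1" "q3 * q3 = 0"
    using assms(2) by (simp_all add: mult_lin_form pbr_lin_form quad_form_eq_iff)
  have coeffs_23: "3 * (p1 * p1) = 3 * (q2 * r3 - q3 * r2)" "3 * (p2 * p2) = q1 * r2 - q2 * r1"
      "3 * (p3 * p3) = 0" "3 * (p1 * p2 + p2 * p1) = 0"
    using assms(3) by (simp_all add: mult_lin_form Const_mult_quad_form pbr_lin_form quad_form_eq_iff)
  have coeff_31: "2 * (q2 * r2) = r1 * p2 - r2 * p1"
    using assms(4) by (simp add: mult_lin_form Const_mult_quad_form pbr_lin_form quad_form_eq_iff)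
  have "q3 = 0" "p3 = 0"
    using coeffs_12(3) coeffs_23(3) by simp_all
  with coeffs_12(1) have "q1 = 0"
    by simp
  with q_nonzero \<open>q3 = 0\<close> have "q2 \<noteq> 0"
    by simp
  moreover from coeffs_12(2) \<open>q1 = 0\<close> have "q2 * q2 = p1 * q2"
    by simp
  ultimately have "p1 = q2"
    by (simp add: mult_right_cancel)
  with coeffs_23(4) \<open>q2 \<noteq> 0\<close> have "p2 = 0"
    by simp
  from coeffs_23(1) \<open>q3 = 0\<close> \<open>p1 = q2\<close> \<open>q2 \<noteq> 0\<close> have "r3 = p1"
    by simp
  from coeffs_23(2) \<open>p2 = 0\<close> \<open>q1 = 0\<close> \<open>q2 \<noteq> 0\<close> have "r1 = 0"
    by simp
  from coeff_31 \<open>r1 = 0\<close> \<open>p1 = q2\<close> \<open>q2 \<noteq> 0\<close> have "r2 = 0"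
    by (simp add: algebra_simps)
  show ?thesis
    using \<open>q3 = 0\<close> \<open>p3 = 0\<close> \<open>q1 = 0\<close> \<open>q2 \<noteq> 0\<close> \<open>p1 = q2\<close> \<open>p2 = 0\<close> \<open>r3 = p1\<close> \<open>r1 = 0\<close> \<open>r2 = 0\<close>
    by simp
qed

lemma gr_poisson_autD:
  assumes "gr_poisson_aut \<phi>"
  shows "inj \<phi>" "\<phi> (f + g) = \<phi> f + \<phi> g" "\<phi> (f * g) = \<phi> f * \<phi> g"
    "\<phi> (Const c * f) = Const c * \<phi> f" "homog d f \<Longrightarrow> homog d (\<phi> f)"
    "\<phi> (pbr f g) = pbr (\<phi> f) (\<phi> g)"
  using assms unfolding gr_poisson_aut_def bij_def by blast+

lemma gr_poisson_aut_Var: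
  fixes \<phi> :: "'k::{idom, ring_char_0} mpoly3 \<Rightarrow> 'k mpoly3"
  assumes aut: "gr_poisson_aut \<phi>"
  obtains a where "a \<noteq> 0" "\<phi> (Var X1) = lin_form a 0 0" "\<phi> (Var X2) = lin_form 0 a 0"
    "\<phi> (Var X3) = lin_form 0 0 a"
proof -
  note hom = gr_poisson_autD[OF aut]
  have "homog 1 (\<phi> (Var v))" for v
    using hom(5) homog_1_Var .
  then obtain p1 p2 p3 q1 q2 q3 r1 r2 r3 where p: "\<phi> (Var X1) = lin_form p1 p2 p3"
    and q: "\<phi> (Var X2) = lin_form q1 q2 q3" and r: "\<phi> (Var X3) = lin_form r1 r2 r3"
    by (metis homog_1_imp_lin_form)
  have "\<phi> 0 = 0"
    using hom(2)[of 0 0] by simp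
  moreover have "Var X2 \<noteq> 0"
    by (simp add: Var_eq_lin_form lin_form_eq_iff flip: lin_form_zero)
  ultimately have "lin_form q1 q2 q3 \<noteq> 0"
    using hom(1) q by (metis injD)
  moreover have "lin_form q1 q2 q3 * lin_form q1 q2 q3 = pbr (lin_form p1 p2 p3) (lin_form q1 q2 q3)"
    using hom(6)[of "Var X1" "Var X2"] by (simp add: pbr_Var hom(3) p q)
  moreover have "Const 3 * (lin_form p1 p2 p3 * lin_form p1 p2 p3)
      = pbr (lin_form q1 q2 q3) (lin_form r1 r2 r3)"
    using hom(6)[of "Var X2" "Var X3"] unfolding pbr_Var hom(4) by (simp only: hom(3) p q r)
  moreover have "Const 2 * (lin_form q1 q2 q3 * lin_form r1 r2 r3)
      = pbr (lin_form r1 r2 r3) (lin_form p1 p2 p3)"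
    using hom(6)[of "Var X3" "Var X1"] unfolding pbr_Var hom(4) by (simp only: hom(3) p q r)
  ultimately show thesis
    using that p q r by (auto dest: lin_forms_pbr_relations)
qed

lemma gr_poisson_aut_homog_1:
  fixes \<phi> :: "'k::{idom, ring_char_0} mpoly3 \<Rightarrow> 'k mpoly3"
  assumes aut: "gr_poisson_aut \<phi>"
  shows "\<exists>a. a \<noteq> 0 \<and> (\<forall>f. homog 1 f \<longrightarrow> \<phi> f = Const a * f)"
proof -
  obtain a where "a \<noteq> 0" and Var: "\<phi> (Var X1) = lin_form a 0 0" "\<phi> (Var X2) = lin_form 0 a 0"
      "\<phi> (Var X3) = lin_form 0 0 a"
    using gr_poisson_aut_Var[OF aut] by blast
  have "\<phi> f = Const a * f" if f: "homog 1 f" for f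
  proof -
    obtain c1 c2 c3 where f_eq: "f = lin_form c1 c2 c3"
      using homog_1_imp_lin_form[OF f] .
    then have "\<phi> f = Const c1 * \<phi> (Var X1) + Const c2 * \<phi> (Var X2) + Const c3 * \<phi> (Var X3)"
      by (simp only: lin_form_eq_sum_Var gr_poisson_autD(2,4)[OF aut])
    also have "\<dots> = Const a * f"
      by (simp add: Var f_eq Const_mult_lin_form add_lin_form mult.commute)
    finally show ?thesis .
  qed
  with \<open>a \<noteq> 0\<close> show ?thesis
    by blast
qed

lemma lin_mat_gr_poisson_aut:
  fixes \<phi> :: "'k::{idom, ring_char_0} mpoly3 \<Rightarrow> 'k mpoly3"
  assumes "gr_poisson_aut \<phi>"
  obtains a where "lin_mat \<phi> = mat 3 3 (\<lambda>(i, j). if i = j then a else 0)"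
proof -
  obtain a where Var: "\<phi> (Var X1) = lin_form a 0 0" "\<phi> (Var X2) = lin_form 0 a 0"
      "\<phi> (Var X3) = lin_form 0 0 a"
    using gr_poisson_aut_Var[OF assms] by blast
  have "lin_mat \<phi> = mat 3 3 (\<lambda>(i, j). if i = j then a else 0)"
    unfolding lin_mat_def
  proof (rule cong_mat)
    fix i j :: nat
    assume "i < 3" "j < 3"
    then have "i \<in> {0, 1, 2}" "j \<in> {0, 1, 2}"
      by auto
    then show "(case (i, j) of (i, j) \<Rightarrow>
        Poly_Mapping.lookup (\<phi> (Var ([X1, X2, X3] ! j))) (mon_var ([X1, X2, X3] ! i)))
      = (case (i, j) of (i, j) \<Rightarrow> if i = j then a else 0)"
      by (auto simp: Var lin_form_def lookup_add lookup_single when_def monomial_eq_iff)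
  qed simp_all
  then show thesis
    by (rule that)
qed

lemma char_poly_scalar_mat:
  "char_poly (mat n n (\<lambda>(i, j). if i = j then a else 0)) = [:- a, 1:] ^ n"
proof -
  let ?A = "mat n n (\<lambda>(i, j). if i = j then a else 0)"
  have "?A \<in> carrier_mat n n" "upper_triangular ?A"
    by (auto simp: upper_triangular_def)
  then have "char_poly ?A = (\<Prod>b \<leftarrow> diag_mat ?A. [:- b, 1:])"
    by (rule char_poly_upper_triangular)
  also have "diag_mat ?A = replicate n a"
    by (simp add: diag_mat_def list_eq_iff_nth_eq)
  finally show ?thesis
    by (simp add: prod_list_replicate)
qed

lemma linear_cube_neq_reflection_poly:
  fixes a \<xi> :: "'k::idom"
  assumes "\<xi> \<noteq> 1"
  shows "[:- a, 1:] ^ 3 \<noteq> [:- 1, 1:] ^ 2 * [:- \<xi>, 1:]"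
proof
  assume eq: "[:- a, 1:] ^ 3 = [:- 1, 1:] ^ 2 * [:- \<xi>, 1:]"
  then have "poly ([:- a, 1:] ^ 3) 1 = poly ([:- 1, 1:] ^ 2 * [:- \<xi>, 1:]) 1"
    by simp
  then have "a = 1"
    by simp
  from eq have "poly ([:- a, 1:] ^ 3) \<xi> = poly ([:- 1, 1:] ^ 2 * [:- \<xi>, 1:]) \<xi>"
    by simp
  with \<open>a = 1\<close> assms show False
    by simp
qed

theorem lemma3p5p1:
  fixes dummy :: "'k::{alg_closed_field, field_char_0}"
  shows "(\<forall>\<phi> :: 'k mpoly3 \<Rightarrow> 'k mpoly3. gr_poisson_aut \<phi> \<longrightarrow>
            (\<exists>a. a \<noteq> 0 \<and> (\<forall>f. homog 1 f \<longrightarrow> \<phi> f = Const a * f)))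
       \<and> \<not> (\<exists>\<phi> :: 'k mpoly3 \<Rightarrow> 'k mpoly3. poisson_reflection \<phi>)"
proof
  show "\<forall>\<phi> :: 'k mpoly3 \<Rightarrow> 'k mpoly3. gr_poisson_aut \<phi> \<longrightarrow>
          (\<exists>a. a \<noteq> 0 \<and> (\<forall>f. homog 1 f \<longrightarrow> \<phi> f = Const a * f))"
    using gr_poisson_aut_homog_1 by blast
  show "\<not> (\<exists>\<phi> :: 'k mpoly3 \<Rightarrow> 'k mpoly3. poisson_reflection \<phi>)"
  proof
    assume "\<exists>\<phi> :: 'k mpoly3 \<Rightarrow> 'k mpoly3. poisson_reflection \<phi>"
    then obtain \<phi> :: "'k mpoly3 \<Rightarrow> 'k mpoly3" and \<xi> where "gr_poisson_aut \<phi>" "\<xi> \<noteq> 1"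
      and char_poly: "char_poly (lin_mat \<phi>) = [:- 1, 1:] ^ 2 * [:- \<xi>, 1:]"
      unfolding poisson_reflection_def by blast
    obtain a where "lin_mat \<phi> = mat 3 3 (\<lambda>(i, j). if i = j then a else 0)"
      using lin_mat_gr_poisson_aut[OF \<open>gr_poisson_aut \<phi>\<close>] by blast
    with char_poly have "[:- a, 1:] ^ 3 = [:- 1, 1:] ^ 2 * [:- \<xi>, 1:]"
      by (simp add: char_poly_scalar_mat)
    with linear_cube_neq_reflection_poly[OF \<open>\<xi> \<noteq> 1\<close>] show False
      by blast
  qed
qed

end
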